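(* For every finite field $\mathbb{F}_q$, the unit-graph on $\operatorname{Mat}_2(\mathbb{F}_q)$ is a strongly regular graph with parameters $(q^4,\; q^4-q^3-q^2+q,\; q^4-2q^3-q^2+3q,\; q^4-2q^3+q)$.
   Context: The unit-graph on $\operatorname{Mat}_2(\mathbb{F}_q)$ is the graph with vertex set $\operatorname{Mat}_2(\mathbb{F}_q)$ in which $A$ and $B$ are adjacent iff $B - A \in \operatorname{GL}_2(\mathbb{F}_q)$. A non-empty, non-complete regular graph is strongly regular with parameters $(n,k,a,c)$ if it has $n$ vertices, is $k$-regular, every pair of distinct adjacent vertices has exactly $a$ common neighbours, and every pair of distinct nonadjacent vertices has exactly $c$ common neighbours. *)

theory Defs
  imports "HOL-Analysis.Analysis"
begin

text \<open>Parameters are integers so that the polynomial expressions in the statement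
  are evaluated without truncated subtraction.\<close>

definition strongly_regular :: "'v set \<Rightarrow> ('v \<Rightarrow> 'v \<Rightarrow> bool) \<Rightarrow> int \<Rightarrow> int \<Rightarrow> int \<Rightarrow> int \<Rightarrow> bool" where
  "strongly_regular V E n k a c \<longleftrightarrow>
     finite V \<and>
     (\<forall>x\<in>V. \<not> E x x) \<and>
     (\<forall>x\<in>V. \<forall>y\<in>V. E x y \<longleftrightarrow> E y x) \<and>
     (\<exists>x\<in>V. \<exists>y\<in>V. E x y) \<and>
     (\<exists>x\<in>V. \<exists>y\<in>V. x \<noteq> y \<and> \<not> E x y) \<and>
     int (card V) = n \<and>
     (\<forall>x\<in>V. int (card {z\<in>V. E x z}) = k) \<and>
     (\<forall>x\<in>V. \<forall>y\<in>V. x \<noteq> y \<and> E x y \<longrightarrow> int (card {z\<in>V. E x z \<and> E y z}) = a) \<and>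
     (\<forall>x\<in>V. \<forall>y\<in>V. x \<noteq> y \<and> \<not> E x y \<longrightarrow> int (card {z\<in>V. E x z \<and> E y z}) = c)"

definition unit_graph_adj :: "'a::field ^2^2 \<Rightarrow> 'a ^2^2 \<Rightarrow> bool" where
  "unit_graph_adj A B \<longleftrightarrow> invertible (B - A)"

end

theory Submission imports Defs begin

(* The common neighbours of x and y are the translates by x of the invertible U with U - D
   invertible, where D = y - x.  By inclusion-exclusion their number is q^4 - 2 s + t D, where
   s = q^3 + q^2 - q counts the singular matrices and t D the matrices U with U and U - D both
   singular.  Since U \<mapsto> P U Q with P, Q invertible preserves this configuration, t D depends
   only on the rank of D, and it suffices to count for D = diag 1 e with e \<in> {0, 1}:
   there the two determinant conditions say bc = ad and d = e (1 - a), which gives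
   t = q^2 + q for invertible D and t = 2 q^2 - q for D of rank one. *)

lemma card_translate: "card {z. P (z - x)} = card {u::'a::ab_group_add. P u}"
proof (rule bij_betw_same_card)
  show "bij_betw (\<lambda>z. z - x) {z. P (z - x)} {u. P u}"
    by (rule bij_betw_byWitness[where f' = "\<lambda>u. u + x"]) auto
qed

lemma card_Compl:
  "int (card (UNIV - A)) = int CARD('a::finite) - int (card (A :: 'a set))"
  by (simp add: card_Diff_subset of_nat_diff card_mono)

lemma matrix_diff_ldistrib: "A ** (B - C) = A ** B - A ** (C::'a::ring_1^'n^'n)"
  by (simp add: vec_eq_iff matrix_matrix_mult_def algebra_simps sum_subtractf)

lemma matrix_diff_rdistrib: "(A - B) ** C = A ** C - B ** (C::'a::ring_1^'n^'n)"
  by (simp add: vec_eq_iff matrix_matrix_mult_def algebra_simps sum_subtractf)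

(* For D = y - x, the translate by x of common_singular D is the set of common
   non-neighbours of x and y in the unit graph. *)
definition common_singular :: "'a::field^'n^'n \<Rightarrow> ('a^'n^'n) set" where
  "common_singular D = {U. det U = 0 \<and> det (U - D) = 0}"

lemma card_common_singular_equiv:
  fixes P Q D :: "'a::field^'n^'n"
  assumes "invertible P" "invertible Q"
  shows "card (common_singular (P ** D ** Q)) = card (common_singular D)"
proof -
  obtain P' where P': "P' ** P = mat 1" "P ** P' = mat 1"
    using assms(1) invertible_def by blast
  obtain Q' where Q': "Q' ** Q = mat 1" "Q ** Q' = mat 1"
    using assms(2) invertible_def by blast
  have det_equiv: "det (P ** V ** Q) = 0 \<longleftrightarrow> det V = 0" for V :: "'a^'n^'n"
    using assms by (simp add: det_mul invertible_det_nz)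
  have diff_equiv: "P ** V ** Q - P ** D ** Q = P ** (V - D) ** Q" for V :: "'a^'n^'n"
    by (simp add: matrix_diff_ldistrib matrix_diff_rdistrib)
  have "bij_betw (\<lambda>V. P ** V ** Q) (common_singular D) (common_singular (P ** D ** Q))"
  proof (rule bij_betw_byWitness[where f' = "\<lambda>U. P' ** U ** Q'"])
    show "\<forall>V\<in>common_singular D. P' ** (P ** V ** Q) ** Q' = V"
      by (metis P'(1) Q'(2) matrix_mul_assoc matrix_mul_lid matrix_mul_rid)
    show "\<forall>U\<in>common_singular (P ** D ** Q). P ** (P' ** U ** Q') ** Q = U"
      by (metis P'(2) Q'(1) matrix_mul_assoc matrix_mul_lid matrix_mul_rid)
    show "(\<lambda>V. P ** V ** Q) ` common_singular D \<subseteq> common_singular (P ** D ** Q)"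
      by (auto simp: common_singular_def det_equiv diff_equiv)
    show "(\<lambda>U. P' ** U ** Q') ` common_singular (P ** D ** Q) \<subseteq> common_singular D"
    proof
      fix V assume "V \<in> (\<lambda>U. P' ** U ** Q') ` common_singular (P ** D ** Q)"
      then obtain U where U: "U \<in> common_singular (P ** D ** Q)" and V: "V = P' ** U ** Q'" by blast
      have "P ** V ** Q = U"
        by (metis V P'(2) Q'(1) matrix_mul_assoc matrix_mul_lid matrix_mul_rid)
      then show "V \<in> common_singular D"
        using U det_equiv[of V] det_equiv[of "V - D"] diff_equiv[of V]
        by (simp add: common_singular_def)
    qed
  qed
  then show ?thesis by (rule bij_betw_same_card[symmetric])
qed

lemma card_common_singular_invertible:
  fixes D :: "'a::field^'n^'n"
  assumes "invertible D"
  shows "card (common_singular D) = card (common_singular (mat 1 :: 'a^'n^'n))"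
proof -
  obtain D' where "D' ** D = mat 1" "D ** D' = mat 1"
    using assms invertible_def by blast
  then have "invertible D'" "invertible (mat 1 :: 'a^'n^'n)" "D' ** D ** mat 1 = mat 1"
    by (auto simp: invertible_def)
  then show ?thesis
    using card_common_singular_equiv[of D' "mat 1" D] by simp
qed

lemma card_invertible:
  "int (card {U::'a::{field,finite}^'n^'n. invertible U}) =
     int CARD('a^'n^'n) - int (card {U::'a^'n^'n. det U = 0})"
proof -
  have "{U::'a^'n^'n. invertible U} = UNIV - {U. det U = 0}"
    by (auto simp: invertible_det_nz)
  then show ?thesis by (simp only: card_Compl)
qed

lemma card_invertible_pair:
  fixes D :: "'a::{field,finite}^'n^'n"
  shows "int (card {U. invertible U \<and> invertible (U - D)}) =
           int CARD('a^'n^'n) - 2 * int (card {U::'a^'n^'n. det U = 0}) + int (card (common_singular D))"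
proof -
  define Z ZD where "Z = {U::'a^'n^'n. det U = 0}" and "ZD = {U::'a^'n^'n. det (U - D) = 0}"
  have "card ZD = card Z"
    unfolding Z_def ZD_def by (rule card_translate)
  moreover have "card (Z \<union> ZD) + card (common_singular D) = card Z + card ZD"
    using card_Un_Int[of Z ZD] by (simp add: Z_def ZD_def common_singular_def Collect_conj_eq)
  moreover have "{U. invertible U \<and> invertible (U - D)} = UNIV - (Z \<union> ZD)"
    by (auto simp: Z_def ZD_def invertible_det_nz)
  ultimately show ?thesis
    unfolding Z_def[symmetric] by (simp only: card_Compl)
qed

definition mat2 :: "'a \<Rightarrow> 'a \<Rightarrow> 'a \<Rightarrow> 'a \<Rightarrow> 'a::zero^2^2" where
  "mat2 a b c d = vector [vector [a, b], vector [c, d]]"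

lemma mat2_nth [simp]:
  "mat2 a b c d $1$1 = a" "mat2 a b c d $1$2 = b" "mat2 a b c d $2$1 = c" "mat2 a b c d $2$2 = d"
  by (simp_all add: mat2_def)

lemma mat2_eta: "mat2 (A$1$1) (A$1$2) (A$2$1) (A$2$2) = A"
  by (simp add: vec_eq_iff forall_2)

lemma mat2_eq_iff:
  "mat2 a b c d = mat2 a' b' c' d' \<longleftrightarrow> a = a' \<and> b = b' \<and> c = c' \<and> d = d'"
  by (metis mat2_nth)

lemma mat2_mult:
  "mat2 a b c d ** mat2 a' b' c' d' =
     mat2 (a*a' + b*c') (a*b' + b*d') (c*a' + d*c') (c*b' + d*d' :: 'a::semiring_1)"
  by (simp add: vec_eq_iff forall_2 matrix_matrix_mult_def sum_2)

lemma mat2_diff: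
  "mat2 a b c d - mat2 a' b' c' d' = mat2 (a - a') (b - b') (c - c') (d - d' :: 'a::ab_group_add)"
  by (simp add: vec_eq_iff forall_2)

lemma det_mat2: "det (mat2 a b c d) = a*d - b*(c::'a::comm_ring_1)"
  by (simp add: det_2)

lemma mat2_zero: "(0::'a::zero^2^2) = mat2 0 0 0 0"
  by (simp add: vec_eq_iff forall_2)

lemma mat2_one: "(mat 1::'a::{zero,one}^2^2) = mat2 1 0 0 1"
  by (simp add: vec_eq_iff forall_2 mat_def)

lemma singular_nonzero_equiv_E11:
  fixes D :: "'a::field^2^2"
  assumes "det D = 0" "D \<noteq> 0"
  obtains P Q where "invertible P" "invertible Q" "P ** D ** Q = mat2 1 0 0 0"
proof -
  (* S i ** D ** S j moves the nonzero entry D$i$j to position (1,1); L and R then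
     clear the rest of the first column and row, and the last entry vanishes since det D = 0. *)
  define S :: "2 \<Rightarrow> 'a^2^2" where "S i = (if i = 1 then mat 1 else mat2 0 1 1 0)" for i
  have S_invertible: "invertible (S i)" for i
    by (simp add: S_def invertible_det_nz det_mat2)
  obtain i j where "D$i$j \<noteq> 0"
    using assms(2) by (auto simp: vec_eq_iff)
  obtain a b c d where abcd: "S i ** D ** S j = mat2 a b c d"
    by (metis mat2_eta)
  have "(S i ** D ** S j)$1$1 = D$i$j"
    using exhaust_2[of i] exhaust_2[of j]
    by (auto simp: S_def matrix_matrix_mult_def sum_2 mat_def)
  with \<open>D$i$j \<noteq> 0\<close> have "a \<noteq> 0" by (simp add: abcd)
  have "det (S i ** D ** S j) = 0"
    using assms(1) by (simp add: det_mul)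
  then have "a*d = b*c" by (simp add: abcd det_mat2)
  define L R :: "'a^2^2" where "L = mat2 (1/a) 0 (-c/a) 1" and "R = mat2 1 (-b/a) 0 1"
  have "invertible L" "invertible R"
    using \<open>a \<noteq> 0\<close> by (simp_all add: L_def R_def invertible_det_nz det_mat2)
  have "L ** mat2 a b c d ** R = mat2 1 0 0 0"
    using \<open>a \<noteq> 0\<close> \<open>a*d = b*c\<close>
    by (simp add: L_def R_def mat2_mult mat2_eq_iff field_simps)
  then have "(L ** S i) ** D ** (S j ** R) = mat2 1 0 0 0"
    by (simp add: abcd[symmetric] matrix_mul_assoc)
  moreover have "invertible (L ** S i)" "invertible (S j ** R)"
    using \<open>invertible L\<close> \<open>invertible R\<close> S_invertible
    by (simp_all add: invertible_mult)
  ultimately show ?thesis using that by blast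
qed

lemma card_common_singular_rank_one:
  fixes D :: "'a::{field,finite}^2^2"
  assumes "det D = 0" "D \<noteq> 0"
  shows "card (common_singular D) = card (common_singular (mat2 1 0 0 0 :: 'a^2^2))"
proof -
  obtain P Q where "invertible P" "invertible Q" "P ** D ** Q = mat2 1 0 0 0"
    using singular_nonzero_equiv_E11 assms by blast
  then show ?thesis
    using card_common_singular_equiv[of P Q D] by simp
qed

lemma card_mat2_by_diagonal:
  fixes P :: "'a::{comm_ring_1,finite} \<times> 'a \<Rightarrow> bool" and g :: "'a \<times> 'a \<Rightarrow> 'a"
  shows "card {U::'a^2^2. P (U$1$1, U$2$2) \<and> U$1$2 * U$2$1 = g (U$1$1, U$2$2)} =
           (\<Sum>x | P x. card {(b,c). b*c = g x})"
proof -
  have "bij_betw (\<lambda>U. ((U$1$1, U$2$2), (U$1$2, U$2$1)))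
          {U::'a^2^2. P (U$1$1, U$2$2) \<and> U$1$2 * U$2$1 = g (U$1$1, U$2$2)}
          (SIGMA x:{x. P x}. {(b,c). b*c = g x})"
    by (rule bij_betw_byWitness[where f' = "\<lambda>((a,d),(b,c)). mat2 a b c d"]) (auto simp: mat2_eta)
  then show ?thesis
    by (simp add: bij_betw_same_card)
qed

lemma card_product_eq:
  fixes t :: "'a::{field,finite}"
  shows "int (card {(b,c). b*c = t}) = int CARD('a) - 1 + (if t = 0 then int CARD('a) else 0)"
proof (cases "t = 0")
  case True
  define A B :: "('a \<times> 'a) set" where "A = {0} \<times> UNIV" and "B = UNIV \<times> {0}"
  have "{(b,c). b*c = t} = A \<union> B" "A \<inter> B = {(0,0)}"
    using True by (auto simp: A_def B_def)
  moreover have "card A = CARD('a)" "card B = CARD('a)"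
    by (simp_all add: A_def B_def card_cartesian_product)
  ultimately show ?thesis
    using card_Un_Int[of A B] True by simp
next
  case False
  have "{(b,c). b*c = t} = (\<lambda>b. (b, t/b)) ` (UNIV - {0})"
    using False by (auto simp: field_simps image_iff)
  moreover have "inj_on (\<lambda>b. (b, t/b)) (UNIV - {0::'a})" by (auto simp: inj_on_def)
  ultimately have "card {(b,c). b*c = t} = CARD('a) - 1"
    by (simp add: card_image card_Diff_subset)
  then show ?thesis
    using False by (simp add: of_nat_diff Suc_leI)
qed

lemma sum_card_product_eq:
  fixes f :: "'b \<Rightarrow> 'a::{field,finite}"
  assumes "finite S"
  shows "(\<Sum>x\<in>S. int (card {(b,c). b*c = f x})) =
           (int CARD('a) - 1) * int (card S) + int CARD('a) * int (card {x\<in>S. f x = 0})"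
  using assms by (simp add: card_product_eq sum.distrib sum.If_cases Int_def conj_commute)

lemma card_singular_mat2:
  "int (card {U::'a::{field,finite}^2^2. det U = 0}) = int CARD('a)^3 + int CARD('a)^2 - int CARD('a)"
proof -
  let ?q = "int CARD('a)"
  have "{U::'a^2^2. det U = 0} = {U. True \<and> U$1$2 * U$2$1 = U$1$1 * U$2$2}"
    by (auto simp: det_2)
  then have "card {U::'a^2^2. det U = 0} =
      (\<Sum>x\<in>UNIV. card {(b,c). b*c = (\<lambda>(a,d). a*d) (x::'a\<times>'a)})"
    using card_mat2_by_diagonal[where P = "\<lambda>_. True" and g = "\<lambda>(a,d). a*d"] by simp
  then have "int (card {U::'a^2^2. det U = 0}) =
      (?q - 1) * int CARD('a\<times>'a) + ?q * int (card {x::'a\<times>'a. (\<lambda>(a,d). a*d) x = 0})"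
    by (simp add: of_nat_sum sum_card_product_eq)
  also have "{x::'a\<times>'a. (\<lambda>(a,d). a*d) x = 0} = {(b,c). b*c = 0}"
    by auto
  also have "(?q - 1) * int CARD('a\<times>'a) + ?q * int (card {(b,c). b*c = (0::'a)}) =
      (?q - 1) * ?q^2 + ?q * (2 * ?q - 1)"
    using card_product_eq[of "0::'a"] by (simp add: power2_eq_square)
  finally show ?thesis by (simp add: algebra_simps power2_eq_square power3_eq_cube)
qed

lemma card_common_singular_diagonal:
  fixes e :: "'a::{field,finite}"
  shows "int (card (common_singular (mat2 1 0 0 e))) =
           int CARD('a)^2 - int CARD('a) + int CARD('a) * int (card {(a,d). d = e*(1-a) \<and> a*d = 0})"
proof -
  let ?q = "int CARD('a)" and ?S = "{(a,d). d = e*(1-a)}"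
  have singular_iff: "a*d - b*c = 0 \<and> (a-1)*(d-e) - b*c = 0 \<longleftrightarrow> d = e*(1-a) \<and> b*c = a*d"
    for a b c d :: 'a
  proof -
    have "(a-1)*(d-e) - b*c = (a*d - b*c) - (d - e*(1-a))" by (simp add: algebra_simps)
    then show ?thesis by auto
  qed
  have "common_singular (mat2 1 0 0 e) =
          {U. U$2$2 = e*(1 - U$1$1) \<and> U$1$2 * U$2$1 = U$1$1 * U$2$2}"
    unfolding common_singular_def det_2 vector_minus_component mat2_nth diff_zero
    by (intro Collect_cong) (rule singular_iff)
  then have "int (card (common_singular (mat2 1 0 0 e))) =
      (?q - 1) * int (card ?S) + ?q * int (card {x\<in>?S. (\<lambda>(a,d). a*d) x = 0})"
    using card_mat2_by_diagonal[where P = "\<lambda>(a,d). d = e*(1-a)" and g = "\<lambda>(a,d). a*d"]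
      sum_card_product_eq[of ?S "\<lambda>(a,d). a*d"]
    by (simp add: of_nat_sum)
  moreover have "card ?S = CARD('a)"
  proof -
    have "?S = (\<lambda>a. (a, e*(1-a))) ` UNIV" by auto
    moreover have "inj (\<lambda>a. (a, e*(1-a)))" by (auto simp: inj_def)
    ultimately show ?thesis by (simp add: card_image)
  qed
  moreover have "{x\<in>?S. (\<lambda>(a,d). a*d) x = 0} = {(a,d). d = e*(1-a) \<and> a*d = 0}" by auto
  ultimately show ?thesis by (simp add: algebra_simps power2_eq_square)
qed

lemma card_common_singular_one:
  "int (card (common_singular (mat 1 :: 'a::{field,finite}^2^2))) = int CARD('a)^2 + int CARD('a)"
proof -
  have "{(a,d). d = 1*(1-a) \<and> a*d = 0} = {(0,1), (1,0::'a)}" by auto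
  then show ?thesis
    using card_common_singular_diagonal[of "1::'a"] by (simp add: mat2_one)
qed

lemma card_common_singular_E11:
  "int (card (common_singular (mat2 1 0 0 0 :: 'a::{field,finite}^2^2))) =
     2 * int CARD('a)^2 - int CARD('a)"
proof -
  have "{(a,d). d = 0*(1-a) \<and> a*d = 0} = (UNIV::'a set) \<times> {0}" by auto
  then show ?thesis
    using card_common_singular_diagonal[of "0::'a"] by (simp add: card_cartesian_product power2_eq_square)
qed

lemma unit_graph_adj_iff_det: "unit_graph_adj x y \<longleftrightarrow> det (y - x) \<noteq> 0"
  by (simp add: unit_graph_adj_def invertible_det_nz)

lemma unit_graph_adj_irrefl: "\<not> unit_graph_adj x x"
  by (simp add: unit_graph_adj_iff_det det_2)

lemma unit_graph_adj_sym: "unit_graph_adj x y \<longleftrightarrow> unit_graph_adj y x"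
  unfolding unit_graph_adj_iff_det by (simp add: det_2 algebra_simps)

lemma card_unit_graph_neighbours:
  fixes x :: "'a::field^2^2"
  shows "card {z. unit_graph_adj x z} = card {U::'a^2^2. invertible U}"
  unfolding unit_graph_adj_def using card_translate[of invertible x] by simp

lemma card_unit_graph_common_neighbours:
  fixes x y :: "'a::field^2^2"
  shows "card {z. unit_graph_adj x z \<and> unit_graph_adj y z} =
           card {U. invertible U \<and> invertible (U - (y - x))}"
proof -
  have "z - y = (z - x) - (y - x)" for z by simp
  then show ?thesis
    unfolding unit_graph_adj_def
    using card_translate[of "\<lambda>U. invertible U \<and> invertible (U - (y - x))" x] by simp
qed

lemma unit_graph_degree:
  fixes x :: "'a::{field,finite}^2^2"
  defines "q \<equiv> int CARD('a)"
  shows "int (card {z. unit_graph_adj x z}) = q^4 - q^3 - q^2 + q"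
proof -
  have "int (card {z. unit_graph_adj x z}) = int CARD('a^2^2) - int (card {U::'a^2^2. det U = 0})"
    by (simp only: card_unit_graph_neighbours card_invertible)
  also have "\<dots> = q^4 - (q^3 + q^2 - q)"
    by (simp add: card_singular_mat2 q_def power_mult[symmetric])
  finally show ?thesis by simp
qed

lemma unit_graph_common_neighbours_adjacent:
  fixes x y :: "'a::{field,finite}^2^2"
  defines "q \<equiv> int CARD('a)"
  assumes "unit_graph_adj x y"
  shows "int (card {z. unit_graph_adj x z \<and> unit_graph_adj y z}) = q^4 - 2*q^3 - q^2 + 3*q"
proof -
  have invertible: "invertible (y - x)"
    using assms(2) by (simp add: unit_graph_adj_def)
  have "int (card {z. unit_graph_adj x z \<and> unit_graph_adj y z}) =
      int CARD('a^2^2) - 2 * int (card {U::'a^2^2. det U = 0}) +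
        int (card (common_singular (mat 1 :: 'a^2^2)))"
    by (simp only: card_unit_graph_common_neighbours card_invertible_pair
        card_common_singular_invertible[OF invertible])
  also have "\<dots> = q^4 - 2 * (q^3 + q^2 - q) + (q^2 + q)"
    by (simp add: card_singular_mat2 card_common_singular_one q_def power_mult[symmetric])
  finally show ?thesis by (simp add: algebra_simps)
qed

lemma unit_graph_common_neighbours_nonadjacent:
  fixes x y :: "'a::{field,finite}^2^2"
  defines "q \<equiv> int CARD('a)"
  assumes "x \<noteq> y" "\<not> unit_graph_adj x y"
  shows "int (card {z. unit_graph_adj x z \<and> unit_graph_adj y z}) = q^4 - 2*q^3 + q"
proof -
  have singular: "det (y - x) = 0" "y - x \<noteq> 0"
    using assms(2,3) by (auto simp: unit_graph_adj_def invertible_det_nz)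
  have "int (card {z. unit_graph_adj x z \<and> unit_graph_adj y z}) =
      int CARD('a^2^2) - 2 * int (card {U::'a^2^2. det U = 0}) +
        int (card (common_singular (mat2 1 0 0 0 :: 'a^2^2)))"
    by (simp only: card_unit_graph_common_neighbours card_invertible_pair
        card_common_singular_rank_one[OF singular])
  also have "\<dots> = q^4 - 2 * (q^3 + q^2 - q) + (2 * q^2 - q)"
    by (simp add: card_singular_mat2 card_common_singular_E11 q_def power_mult[symmetric])
  finally show ?thesis by (simp add: algebra_simps)
qed

theorem theorem3p5:
  fixes q :: int
  assumes "q = int CARD('a::{field,finite})"
  shows "strongly_regular (UNIV :: ('a ^2^2) set) unit_graph_adj
           (q^4) (q^4 - q^3 - q^2 + q) (q^4 - 2*q^3 - q^2 + 3*q) (q^4 - 2*q^3 + q)"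
  unfolding strongly_regular_def
proof (intro conjI ballI impI)
  show "\<not> unit_graph_adj x x" "unit_graph_adj x y = unit_graph_adj y x" for x y :: "'a^2^2"
    by (simp_all add: unit_graph_adj_irrefl unit_graph_adj_sym)
  show "\<exists>x\<in>UNIV. \<exists>y\<in>UNIV. unit_graph_adj x (y::'a^2^2)"
    using unit_graph_adj_iff_det[of 0 "mat 1"] by auto
  have "(0::'a^2^2) \<noteq> mat2 1 0 0 0 \<and> \<not> unit_graph_adj 0 (mat2 1 0 0 0 :: 'a^2^2)"
    by (simp add: unit_graph_adj_iff_det det_mat2 mat2_zero mat2_diff mat2_eq_iff)
  then show "\<exists>x\<in>UNIV. \<exists>y\<in>UNIV. x \<noteq> y \<and> \<not> unit_graph_adj x (y::'a^2^2)"
    by blast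
  show "int (card (UNIV :: ('a^2^2) set)) = q^4"
    using assms by (simp add: power_mult[symmetric])
  show "finite (UNIV :: ('a^2^2) set)" by simp
  show "int (card {z\<in>UNIV. unit_graph_adj x z}) = q^4 - q^3 - q^2 + q" for x :: "'a^2^2"
    using unit_graph_degree[of x] assms by simp
  show "int (card {z\<in>UNIV. unit_graph_adj x z \<and> unit_graph_adj y z}) = q^4 - 2*q^3 - q^2 + 3*q"
    if "x \<noteq> y \<and> unit_graph_adj x y" for x y :: "'a^2^2"
    using that unit_graph_common_neighbours_adjacent[of x y] assms by simp
  show "int (card {z\<in>UNIV. unit_graph_adj x z \<and> unit_graph_adj y z}) = q^4 - 2*q^3 + q"
    if "x \<noteq> y \<and> \<not> unit_graph_adj x y" for x y :: "'a^2^2"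
    using that unit_graph_common_neighbours_nonadjacent[of x y] assms by simp
qed

end
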